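(* Let $d\geq 1$, $n\geq 1$ and $r\geq 2$ be integers. Then $M''(n,r,d)\le \left\lfloor \frac{d(n-1)}{r-1}\right\rfloor$.
   Context: All measures are probability measures on $\mathbb{R}^d$ absolutely continuous with respect to Lebesgue measure. A partition of $\mathbb{R}^d$ into $n$ parts formed by iterated hyperplane cuts is an ordered tuple $(K_1,\dots,K_n)$ of closed convex sets (some possibly empty) obtained by starting from the single part $\mathbb{R}^d$ and repeatedly choosing one existing part $C$ and replacing it by $C\cap H^+$ and $C\cap H^-$, where $H^+,H^-$ are the two closed half-spaces of an affine hyperplane, until there are $n$ parts. $M''(n,r,d)$ is the largest integer $M''$ such that for any $M''$ measures $\mu_1,\dots,\mu_{M''}$ on $\mathbb{R}^d$ there is such a partition $(K_1,\dots,K_n)$ and a map $\ell\colon[n]\to[r]$ with $\mu_j\big(\bigcup_{i\in\ell^{-1}(s)}K_i\big)=\tfrac1r$ for all $1\le j\le M''$ and $1\le s\le r$. *)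

theory Defs
  imports "HOL-Probability.Probability"
begin

inductive hcut_partition :: "'a::euclidean_space set list \<Rightarrow> bool" where
  base: "hcut_partition [UNIV]"
| cut: "\<lbrakk> hcut_partition Ks; i < length Ks; a \<noteq> 0 \<rbrakk> \<Longrightarrow>
     hcut_partition (Ks[i := Ks ! i \<inter> {x. a \<bullet> x \<le> b}] @ [Ks ! i \<inter> {x. a \<bullet> x \<ge> b}])"

definition admissible_measure :: "'a::euclidean_space measure \<Rightarrow> bool" where
  "admissible_measure \<mu> \<longleftrightarrow> sets \<mu> = sets lborel \<and> prob_space \<mu> \<and> absolutely_continuous lborel \<mu>"

definition fair_split_property :: "nat \<Rightarrow> nat \<Rightarrow> nat \<Rightarrow> 'a::euclidean_space itself \<Rightarrow> bool" where
  "fair_split_property n r m _ \<longleftrightarrow>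
     (\<forall>\<mu> :: nat \<Rightarrow> 'a measure. (\<forall>j<m. admissible_measure (\<mu> j)) \<longrightarrow>
        (\<exists>Ks lab. hcut_partition Ks \<and> length Ks = n \<and> (\<forall>i<n. lab i < r) \<and>
           (\<forall>j<m. \<forall>s<r. measure (\<mu> j) (\<Union>i\<in>{i. i < n \<and> lab i = s}. Ks ! i) = 1 / real r)))"

definition Mpp :: "nat \<Rightarrow> nat \<Rightarrow> 'a::euclidean_space itself \<Rightarrow> nat" where
  "Mpp n r T = (GREATEST m. fair_split_property n r m T)"

end

theory Submission
  imports Defs
begin

text \<open>Take m points in general position (any d + 1 of them affinely independent) and
  shrink balls around them so that no hyperplane meets more than d of the balls.
  Under a fair split of the uniform measures on these balls, every colour class has
  positive measure in every ball, so each ball meets at least r of the parts.  On the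
  other hand, each of the n - 1 cuts raises the number of ball--part incidences only
  for the balls its hyperplane separates, i.e. by at most d.  Hence
  m r \<le> m + d (n - 1), that is m (r - 1) \<le> d (n - 1).\<close>

definition general_position :: "nat \<Rightarrow> (nat \<Rightarrow> 'a::euclidean_space) \<Rightarrow> bool" where
  "general_position m p \<longleftrightarrow>
     (\<forall>T \<subseteq> {..<m}. card T \<le> DIM('a) + 1 \<longrightarrow> inj_on p T \<and> \<not> affine_dependent (p ` T))"

lemma negligible_affine_hull_card_le:
  fixes S :: "'a::euclidean_space set"
  assumes "finite S" and "card S \<le> DIM('a)"
  shows "negligible (affine hull S)"
proof -
  have "aff_dim (affine hull S) < DIM('a)"
    using aff_dim_le_card[OF assms(1)] assms(2) by (simp add: aff_dim_affine_hull)
  then obtain a b where "a \<noteq> 0" "affine hull S \<subseteq> {x. a \<bullet> x = b}"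
    by (rule aff_lowdim_subset_hyperplane)
  then show ?thesis
    using negligible_hyperplane negligible_subset by blast
qed

lemma general_position_extend:
  fixes p :: "nat \<Rightarrow> 'a::euclidean_space"
  assumes gp: "general_position m p"
  obtains q where "general_position (Suc m) (p(m := q))"
proof -
  let ?F = "{T. T \<subseteq> {..<m} \<and> card T \<le> DIM('a)}"
  have "finite ?F"
    by (rule finite_subset[of _ "Pow {..<m}"]) auto
  moreover have "negligible (affine hull (p ` T))" if "T \<in> ?F" for T
    using that finite_subset[of T "{..<m}"] card_image_le[of T p]
    by (intro negligible_affine_hull_card_le) auto
  ultimately have "negligible (\<Union>T\<in>?F. affine hull (p ` T))"
    by (intro negligible_Union) auto
  then obtain q where q: "q \<notin> (\<Union>T\<in>?F. affine hull (p ` T))"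
    using non_negligible_UNIV by (metis UNIV_eq_I)
  have "general_position (Suc m) (p(m := q))"
    unfolding general_position_def
  proof (intro allI impI)
    fix T assume T: "T \<subseteq> {..<Suc m}" "card T \<le> DIM('a) + 1"
    show "inj_on (p(m := q)) T \<and> \<not> affine_dependent (p(m := q) ` T)"
    proof (cases "m \<in> T")
      case False
      then have "T \<subseteq> {..<m}"
        using T(1) by (auto simp: less_Suc_eq)
      moreover have "inj_on (p(m := q)) T = inj_on p T" "p(m := q) ` T = p ` T"
        using False by (auto intro!: inj_on_cong)
      ultimately show ?thesis
        using gp T(2) by (simp add: general_position_def)
    next
      case True
      define T' where "T' = T - {m}"
      have T': "T' \<subseteq> {..<m}" "card T' \<le> DIM('a)"
        using T True finite_subset[of T "{..<Suc m}"] by (auto simp: T'_def less_Suc_eq)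
      then have indep: "inj_on p T'" "\<not> affine_dependent (p ` T')"
        using gp by (auto simp: general_position_def)
      have "q \<notin> affine hull (p ` T')"
        using q T' by blast
      then have "q \<notin> p ` T'"
        by (meson hull_inc)
      moreover have "inj_on (p(m := q)) T'" "p(m := q) ` T' = p ` T'"
        using indep(1) inj_on_cong[of T' "p(m := q)" p] by (auto simp: T'_def)
      moreover have "T = insert m T'" "m \<notin> T'"
        using True by (auto simp: T'_def)
      ultimately show ?thesis
        using affine_independent_insert[OF indep(2) \<open>q \<notin> affine hull (p ` T')\<close>] by auto
    qed
  qed
  then show thesis ..
qed

lemma general_position_exists: "\<exists>p :: nat \<Rightarrow> 'a::euclidean_space. general_position m p"
proof (induction m)
  case 0
  show ?case by (simp add: general_position_def)
next
  case (Suc m)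
  then show ?case by (metis general_position_extend)
qed

lemma general_position_card_hyperplane:
  fixes p :: "nat \<Rightarrow> 'a::euclidean_space"
  assumes gp: "general_position m p" and "a \<noteq> 0"
  shows "card {j. j < m \<and> a \<bullet> p j = b} \<le> DIM('a)"
proof (rule ccontr)
  assume "\<not> ?thesis"
  then have "DIM('a) + 1 \<le> card {j. j < m \<and> a \<bullet> p j = b}"
    by simp
  then obtain T where T: "T \<subseteq> {j. j < m \<and> a \<bullet> p j = b}" "card T = DIM('a) + 1"
    by (rule obtain_subset_with_card_n)
  then have indep: "inj_on p T" "\<not> affine_dependent (p ` T)"
    using gp by (auto simp: general_position_def)
  have "int DIM('a) = aff_dim (p ` T)"
    using aff_dim_affine_independent[OF indep(2)] card_image[OF indep(1)] T(2) by simp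
  also have "\<dots> \<le> aff_dim {x. a \<bullet> x = b}"
    using T(1) by (intro aff_dim_subset) auto
  also have "\<dots> = int DIM('a) - 1"
    using \<open>a \<noteq> 0\<close> by simp
  finally show False by simp
qed

text \<open>The margin is the minimum of \<open>\<Sum>x\<in>S. \<bar>a \<bullet> x - b\<bar>\<close> over unit normals a and
  bounded offsets b, a compact set; large offsets are handled directly.\<close>
lemma finite_set_hyperplane_margin:
  fixes S :: "'a::euclidean_space set"
  assumes "finite S" and not_flat: "\<And>a b. a \<noteq> 0 \<Longrightarrow> \<not> S \<subseteq> {x. a \<bullet> x = b}"
  obtains \<delta> where "\<delta> > 0" "\<And>a b. norm a = 1 \<Longrightarrow> \<exists>x\<in>S. \<delta> \<le> \<bar>a \<bullet> x - b\<bar>"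
proof -
  obtain e :: 'a where e: "e \<in> Basis"
    using nonempty_Basis by blast
  then have "S \<noteq> {}"
    using not_flat[of e 0] by (auto simp: nonzero_Basis)
  define R where "R = (\<Sum>x\<in>S. norm x) + 1"
  define g where "g = (\<lambda>z. \<Sum>x\<in>S. \<bar>fst z \<bullet> x - snd z\<bar>)"
  define K where "K = sphere (0::'a) 1 \<times> cball (0::real) R"
  have "0 \<le> R"
    unfolding R_def by (simp add: sum_nonneg)
  then have "K \<noteq> {}"
    using e by (auto simp: K_def)
  moreover have "compact K"
    unfolding K_def by (intro compact_Times compact_sphere compact_cball)
  moreover have "continuous_on K g"
    unfolding g_def by (intro continuous_intros)
  ultimately obtain z where "z \<in> K" and zmin: "\<forall>y\<in>K. g z \<le> g y"
    by (meson continuous_attains_inf)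
  have "0 < g z"
  proof -
    obtain a b where z: "z = (a, b)" "norm a = 1"
      using \<open>z \<in> K\<close> by (auto simp: K_def)
    then obtain x where "x \<in> S" "a \<bullet> x \<noteq> b"
      using not_flat[of a b] by force
    then have "0 < \<bar>a \<bullet> x - b\<bar>" by simp
    also have "\<dots> \<le> g z"
      unfolding z g_def fst_conv snd_conv using \<open>finite S\<close> \<open>x \<in> S\<close>
      by (intro member_le_sum) auto
    finally show ?thesis .
  qed
  define \<delta> where "\<delta> = min 1 (g z / card S)"
  have "0 < card S"
    using \<open>finite S\<close> \<open>S \<noteq> {}\<close> by (simp add: card_gt_0_iff)
  have "card S * \<delta> \<le> card S * (g z / card S)"
    by (intro mult_left_mono) (auto simp: \<delta>_def)
  then have "card S * \<delta> \<le> g z"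
    using \<open>0 < card S\<close> by simp
  have "\<delta> \<le> 1"
    by (simp add: \<delta>_def)
  have "\<delta> > 0"
    using \<open>0 < g z\<close> \<open>0 < card S\<close> by (auto simp: \<delta>_def)
  moreover have "\<exists>x\<in>S. \<delta> \<le> \<bar>a \<bullet> x - b\<bar>" if "norm a = 1" for a b
  proof (cases "\<bar>b\<bar> \<le> R")
    case True
    show ?thesis
    proof (rule ccontr)
      assume "\<not> ?thesis"
      then have "g (a, b) < (\<Sum>x\<in>S. \<delta>)"
        unfolding g_def fst_conv snd_conv using \<open>finite S\<close> \<open>S \<noteq> {}\<close>
        by (intro sum_strict_mono) auto
      also have "\<dots> \<le> g z"
        using \<open>card S * \<delta> \<le> g z\<close> by simp
      also have "\<dots> \<le> g (a, b)"
        using True that zmin by (simp add: K_def)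
      finally show False by simp
    qed
  next
    case False
    obtain x where "x \<in> S"
      using \<open>S \<noteq> {}\<close> by blast
    have "\<bar>a \<bullet> x\<bar> \<le> norm x"
      using Cauchy_Schwarz_ineq2[of a x] that by simp
    moreover have "norm x + 1 \<le> R"
      unfolding R_def using \<open>finite S\<close> \<open>x \<in> S\<close> by (simp add: member_le_sum)
    moreover have "\<bar>b\<bar> - \<bar>a \<bullet> x\<bar> \<le> \<bar>a \<bullet> x - b\<bar>"
      by (metis abs_minus_commute abs_triangle_ineq2)
    ultimately have "\<delta> \<le> \<bar>a \<bullet> x - b\<bar>"
      using False \<open>\<delta> \<le> 1\<close> by linarith
    then show ?thesis
      using \<open>x \<in> S\<close> by blast
  qed
  ultimately show thesis ..
qed

lemma general_position_hyperplane_margin: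
  fixes p :: "nat \<Rightarrow> 'a::euclidean_space"
  assumes gp: "general_position m p"
  obtains \<delta> where "\<delta> > 0"
    "\<And>a b. a \<noteq> 0 \<Longrightarrow> card {j. j < m \<and> \<bar>a \<bullet> p j - b\<bar> < \<delta> * norm a} \<le> DIM('a)"
proof -
  let ?F = "{T. T \<subseteq> {..<m} \<and> card T = DIM('a) + 1}"
  have "\<exists>\<delta>>0. \<forall>a b. norm a = 1 \<longrightarrow> (\<exists>j\<in>T. \<delta> \<le> \<bar>a \<bullet> p j - b\<bar>)" if T: "T \<in> ?F" for T
  proof -
    have "finite (p ` T)"
      using T finite_subset[of T "{..<m}"] by auto
    moreover have "\<not> p ` T \<subseteq> {x. a \<bullet> x = b}" if "a \<noteq> 0" for a b
    proof
      assume "p ` T \<subseteq> {x. a \<bullet> x = b}"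
      then have "card T \<le> card {j. j < m \<and> a \<bullet> p j = b}"
        using T by (intro card_mono) auto
      then show False
        using general_position_card_hyperplane[OF gp that, of b] T by simp
    qed
    ultimately obtain \<delta> where "\<delta> > 0" and "\<And>a b. norm a = 1 \<Longrightarrow> \<exists>x\<in>p ` T. \<delta> \<le> \<bar>a \<bullet> x - b\<bar>"
      using finite_set_hyperplane_margin by metis
    then show ?thesis
      by (metis imageE)
  qed
  then obtain f where f: "\<And>T. T \<in> ?F \<Longrightarrow>
      f T > 0 \<and> (\<forall>a b. norm a = 1 \<longrightarrow> (\<exists>j\<in>T. f T \<le> \<bar>a \<bullet> p j - b\<bar>))"
    by metis
  define \<delta> where "\<delta> = Min (insert 1 (f ` ?F))"
  have "finite ?F"
    by (rule finite_subset[of _ "Pow {..<m}"]) auto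
  then have \<delta>_le: "\<And>T. T \<in> ?F \<Longrightarrow> \<delta> \<le> f T"
    by (simp add: \<delta>_def)
  have "\<delta> > 0"
    using \<open>finite ?F\<close> f by (simp add: \<delta>_def)
  moreover have "card {j. j < m \<and> \<bar>a \<bullet> p j - b\<bar> < \<delta> * norm a} \<le> DIM('a)" if "a \<noteq> 0" for a b
  proof (rule ccontr)
    assume "\<not> ?thesis"
    then have "DIM('a) + 1 \<le> card {j. j < m \<and> \<bar>a \<bullet> p j - b\<bar> < \<delta> * norm a}"
      by simp
    then obtain T where T: "T \<subseteq> {j. j < m \<and> \<bar>a \<bullet> p j - b\<bar> < \<delta> * norm a}" "card T = DIM('a) + 1"
      by (rule obtain_subset_with_card_n)
    then have "T \<in> ?F"
      by auto
    moreover have "norm (a /\<^sub>R norm a) = 1"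
      using that by simp
    ultimately obtain j where "j \<in> T" and margin: "f T \<le> \<bar>(a /\<^sub>R norm a) \<bullet> p j - b / norm a\<bar>"
      using f by blast
    note margin
    also have "\<bar>(a /\<^sub>R norm a) \<bullet> p j - b / norm a\<bar> = \<bar>a \<bullet> p j - b\<bar> / norm a"
      by (simp add: inverse_eq_divide diff_divide_distrib[symmetric])
    also have "\<dots> < \<delta>"
      using T(1) \<open>j \<in> T\<close> that by (auto simp: divide_less_eq)
    finally show False
      using \<delta>_le[OF \<open>T \<in> ?F\<close>] by simp
  qed
  ultimately show thesis ..
qed

lemma ball_meets_both_halfspaces:
  fixes a c :: "'a::real_inner"
  assumes "x \<in> ball c \<delta>" "a \<bullet> x \<le> b" "y \<in> ball c \<delta>" "b \<le> a \<bullet> y" "a \<noteq> 0"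
  shows "\<bar>a \<bullet> c - b\<bar> < \<delta> * norm a"
proof -
  have "\<bar>a \<bullet> c - a \<bullet> z\<bar> < \<delta> * norm a" if "z \<in> ball c \<delta>" for z
  proof -
    have "\<bar>a \<bullet> c - a \<bullet> z\<bar> \<le> norm a * dist c z"
      using Cauchy_Schwarz_ineq2[of a "c - z"] by (simp add: inner_diff_right dist_norm)
    also have "\<dots> < \<delta> * norm a"
      using that \<open>a \<noteq> 0\<close> by (simp add: mult.commute)
    finally show ?thesis .
  qed
  then show ?thesis
    using assms by (smt (verit))
qed

definition parts_meeting :: "'a set \<Rightarrow> 'a set list \<Rightarrow> nat" where
  "parts_meeting B Ks = length (filter (\<lambda>K. K \<inter> B \<noteq> {}) Ks)"

lemma length_filter_list_update:
  "i < length xs \<Longrightarrow>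
    length (filter P (xs[i := y])) + of_bool (P (xs ! i)) = length (filter P xs) + of_bool (P y)"
proof (induction xs arbitrary: i)
  case Nil
  then show ?case by simp
next
  case (Cons x xs)
  then show ?case by (cases i) auto
qed

lemma parts_meeting_split:
  assumes "i < length Ks" and "L \<subseteq> Ks ! i" and "U \<subseteq> Ks ! i"
  shows "parts_meeting B (Ks[i := L] @ [U])
    \<le> parts_meeting B Ks + of_bool (L \<inter> B \<noteq> {} \<and> U \<inter> B \<noteq> {})"
proof -
  have "of_bool (L \<inter> B \<noteq> {}) + of_bool (U \<inter> B \<noteq> {})
      \<le> of_bool (Ks ! i \<inter> B \<noteq> {}) + (of_bool (L \<inter> B \<noteq> {} \<and> U \<inter> B \<noteq> {}) :: nat)"
    using assms(2,3) by auto
  moreover have "parts_meeting B (Ks[i := L] @ [U])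
      = length (filter (\<lambda>K. K \<inter> B \<noteq> {}) (Ks[i := L])) + of_bool (U \<inter> B \<noteq> {})"
    by (simp add: parts_meeting_def)
  ultimately show ?thesis
    using length_filter_list_update[OF assms(1), of "\<lambda>K. K \<inter> B \<noteq> {}" L]
    unfolding parts_meeting_def by linarith
qed

lemma sum_parts_meeting_le:
  fixes B :: "nat \<Rightarrow> 'a::euclidean_space set"
  assumes straddling: "\<And>a b. a \<noteq> 0 \<Longrightarrow>
      card {j. j < m \<and> B j \<inter> {x. a \<bullet> x \<le> b} \<noteq> {} \<and> B j \<inter> {x. a \<bullet> x \<ge> b} \<noteq> {}} \<le> k"
    and "hcut_partition Ks"
  shows "(\<Sum>j<m. parts_meeting (B j) Ks) \<le> m + k * (length Ks - 1)"
  using \<open>hcut_partition Ks\<close>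
proof (induction rule: hcut_partition.induct)
  case base
  have "parts_meeting (B j) [UNIV] \<le> 1" for j
    by (simp add: parts_meeting_def)
  then show ?case
    using sum_mono[of "{..<m}" "\<lambda>j. parts_meeting (B j) [UNIV]" "\<lambda>_. 1"] by simp
next
  case (cut Ks i a b)
  let ?L = "Ks ! i \<inter> {x. a \<bullet> x \<le> b}" and ?U = "Ks ! i \<inter> {x. a \<bullet> x \<ge> b}"
  let ?split = "{j. j < m \<and> ?L \<inter> B j \<noteq> {} \<and> ?U \<inter> B j \<noteq> {}}"
  have "card ?split
      \<le> card {j. j < m \<and> B j \<inter> {x. a \<bullet> x \<le> b} \<noteq> {} \<and> B j \<inter> {x. a \<bullet> x \<ge> b} \<noteq> {}}"
    by (intro card_mono) auto
  also have "\<dots> \<le> k"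
    using straddling[OF cut.hyps(3)] .
  finally have "card ?split \<le> k" .
  have "(\<Sum>j<m. parts_meeting (B j) (Ks[i := ?L] @ [?U]))
      \<le> (\<Sum>j<m. parts_meeting (B j) Ks + of_bool (?L \<inter> B j \<noteq> {} \<and> ?U \<inter> B j \<noteq> {}))"
    using cut.hyps(2) by (intro sum_mono parts_meeting_split) auto
  also have "\<dots> = (\<Sum>j<m. parts_meeting (B j) Ks) + card ?split"
    by (simp add: sum.distrib Int_def)
  finally show ?case
    using cut.IH \<open>card ?split \<le> k\<close> cut.hyps(2) by (cases "length Ks") auto
qed

lemma admissible_uniform_measure_ball:
  fixes c :: "'a::euclidean_space"
  assumes "0 < \<delta>"
  shows "admissible_measure (uniform_measure lborel (ball c \<delta>))"
proof -
  have "emeasure lborel (ball c \<delta>) = ennreal (measure lborel (ball c \<delta>))"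
    using emeasure_lborel_ball_finite[of c \<delta>] by (intro emeasure_eq_ennreal_measure) simp
  then have "emeasure lborel (ball c \<delta>) \<noteq> 0" "emeasure lborel (ball c \<delta>) \<noteq> \<infinity>"
    using content_ball_pos[OF assms] by simp_all
  then have "prob_space (uniform_measure lborel (ball c \<delta>))"
    by (rule prob_space_uniform_measure)
  moreover have [measurable]: "ball c \<delta> \<in> sets borel"
    by simp
  then have "absolutely_continuous lborel (uniform_measure lborel (ball c \<delta>))"
    unfolding uniform_measure_def by (intro absolutely_continuousI_density) measurable
  ultimately show ?thesis
    by (simp add: admissible_measure_def)
qed

lemma uniform_measure_nonzero_meets:
  assumes "S \<in> sets M" and "measure (uniform_measure M S) A \<noteq> 0"
  shows "A \<inter> S \<noteq> {}"
proof
  assume "A \<inter> S = {}"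
  have "measure (uniform_measure M S) A = 0"
  proof (cases "A \<in> sets M")
    case True
    then show ?thesis
      using assms(1) \<open>A \<inter> S = {}\<close> by (simp add: measure_def Int_commute)
  next
    case False
    then show ?thesis
      by (simp add: measure_notin_sets)
  qed
  with assms(2) show False ..
qed

lemma hcut_partition_exists: "\<exists>Ks :: 'a::euclidean_space set list. hcut_partition Ks \<and> length Ks = Suc k"
proof (induction k)
  case 0
  show ?case
    using hcut_partition.base by fastforce
next
  case (Suc k)
  then obtain Ks :: "'a set list" where "hcut_partition Ks" "length Ks = Suc k"
    by blast
  moreover obtain e :: 'a where "e \<in> Basis"
    using nonempty_Basis by blast
  ultimately show ?case
    using hcut_partition.cut[of Ks 0 e 0] by (fastforce simp: nonzero_Basis)
qed

lemma fair_split_property_le: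
  assumes fair: "fair_split_property n r m TYPE('a::euclidean_space)" and "r \<ge> 1"
  shows "m * (r - 1) \<le> DIM('a) * (n - 1)"
proof -
  obtain p :: "nat \<Rightarrow> 'a" where gp: "general_position m p"
    using general_position_exists by blast
  obtain \<delta> where "\<delta> > 0"
    and thin: "\<And>a b. a \<noteq> 0 \<Longrightarrow> card {j. j < m \<and> \<bar>a \<bullet> p j - b\<bar> < \<delta> * norm a} \<le> DIM('a)"
    using general_position_hyperplane_margin[OF gp] by metis
  let ?B = "\<lambda>j. ball (p j) \<delta>"
  have adm: "\<forall>j<m. admissible_measure (uniform_measure lborel (?B j))"
    using admissible_uniform_measure_ball[OF \<open>\<delta> > 0\<close>] by blast
  obtain Ks lab where Ks: "hcut_partition Ks" "length Ks = n" and lab: "\<forall>i<n. lab i < r"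
    and shares: "\<forall>j<m. \<forall>s<r.
      measure (uniform_measure lborel (?B j)) (\<Union>i\<in>{i. i < n \<and> lab i = s}. Ks ! i) = 1 / real r"
    using fair[unfolded fair_split_property_def, THEN spec, THEN mp, OF adm]
    by (elim exE conjE) (rule that)
  have "r \<le> parts_meeting (?B j) Ks" if "j < m" for j
  proof -
    have "{..<r} \<subseteq> lab ` {i. i < n \<and> Ks ! i \<inter> ?B j \<noteq> {}}"
    proof
      fix s assume "s \<in> {..<r}"
      then have "measure (uniform_measure lborel (?B j)) (\<Union>i\<in>{i. i < n \<and> lab i = s}. Ks ! i)
          = 1 / real r"
        using shares that by blast
      then have "measure (uniform_measure lborel (?B j)) (\<Union>i\<in>{i. i < n \<and> lab i = s}. Ks ! i) \<noteq> 0"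
        using \<open>r \<ge> 1\<close> by simp
      then have "(\<Union>i\<in>{i. i < n \<and> lab i = s}. Ks ! i) \<inter> ?B j \<noteq> {}"
        by (rule uniform_measure_nonzero_meets[rotated]) simp
      then show "s \<in> lab ` {i. i < n \<and> Ks ! i \<inter> ?B j \<noteq> {}}"
        by blast
    qed
    then have "card {..<r} \<le> card (lab ` {i. i < n \<and> Ks ! i \<inter> ?B j \<noteq> {}})"
      by (intro card_mono) auto
    also have "\<dots> \<le> card {i. i < n \<and> Ks ! i \<inter> ?B j \<noteq> {}}"
      by (intro card_image_le) auto
    finally show ?thesis
      using Ks(2) by (simp add: parts_meeting_def length_filter_conv_card)
  qed
  then have "m * r \<le> (\<Sum>j<m. parts_meeting (?B j) Ks)"
    using sum_mono[of "{..<m}" "\<lambda>_. r"] by simp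
  also have "\<dots> \<le> m + DIM('a) * (length Ks - 1)"
  proof (rule sum_parts_meeting_le[OF _ Ks(1)])
    fix a :: 'a and b assume "a \<noteq> 0"
    let ?split = "{j. j < m \<and> ?B j \<inter> {x. a \<bullet> x \<le> b} \<noteq> {} \<and> ?B j \<inter> {x. a \<bullet> x \<ge> b} \<noteq> {}}"
    have "\<bar>a \<bullet> p j - b\<bar> < \<delta> * norm a" if split: "j \<in> ?split" for j
    proof -
      obtain x y where "x \<in> ?B j" "a \<bullet> x \<le> b" "y \<in> ?B j" "b \<le> a \<bullet> y"
        using split by blast
      then show ?thesis
        using \<open>a \<noteq> 0\<close> by (rule ball_meets_both_halfspaces)
    qed
    then have "card ?split \<le> card {j. j < m \<and> \<bar>a \<bullet> p j - b\<bar> < \<delta> * norm a}"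
      by (intro card_mono) auto
    then show "card ?split \<le> DIM('a)"
      using thin[OF \<open>a \<noteq> 0\<close>, of b] by linarith
  qed
  finally show ?thesis
    using Ks(2) by (simp add: diff_mult_distrib2)
qed

theorem mainTheorem3:
  assumes "n \<ge> 1" and "r \<ge> 2"
  shows "int (Mpp n r TYPE('a::euclidean_space))
           \<le> \<lfloor> real DIM('a) * (real n - 1) / (real r - 1) \<rfloor>"
proof -
  let ?P = "\<lambda>m. fair_split_property n r m TYPE('a)"
  let ?M = "Mpp n r TYPE('a)"
  obtain Ks :: "'a set list" where "hcut_partition Ks" "length Ks = n"
    using hcut_partition_exists[of "n - 1"] \<open>n \<ge> 1\<close> by auto
  then have "?P 0"
    unfolding fair_split_property_def using \<open>r \<ge> 2\<close>
    by (intro allI impI exI[of _ Ks] exI[of _ "\<lambda>_::nat. 0::nat"]) simp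
  moreover have "m \<le> DIM('a) * (n - 1)" if "?P m" for m
  proof -
    have "1 \<le> r - 1"
      using \<open>r \<ge> 2\<close> by simp
    then have "m \<le> m * (r - 1)"
      using mult_le_mono2[of 1 "r - 1" m] by simp
    then show ?thesis
      using fair_split_property_le[OF that] \<open>r \<ge> 2\<close> by linarith
  qed
  ultimately have "?P ?M"
    unfolding Mpp_def by (rule GreatestI_nat)
  then have "?M * (r - 1) \<le> DIM('a) * (n - 1)"
    by (rule fair_split_property_le) (use \<open>r \<ge> 2\<close> in simp)
  then have "real (?M * (r - 1)) \<le> real (DIM('a) * (n - 1))"
    by (simp only: of_nat_le_iff)
  then have "real ?M * (real r - 1) \<le> real DIM('a) * (real n - 1)"
    using assms by (simp add: of_nat_diff)
  then show ?thesis
    using \<open>r \<ge> 2\<close> by (simp add: le_floor_iff pos_le_divide_eq)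
qed

end
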